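(* Let $l\ge1$ and $\mu\ge0$ be integers. Then the Schur–Szegő composition of entire functions $$U:=\underbrace{e^xx*\cdots*e^xx}_{l\text{ factors}}*e^x(x-1)*e^x(x-2)*\cdots*e^x(x-\mu)$$ is of the form $e^xY$, where $Y$ is a polynomial of degree $l+\mu$ having a root of multiplicity $\mu+1$ at $0$ and $l-1$ simple negative roots.
   Context: Schur–Szegő composition of entire functions: for $f=\sum_{j\ge0}\gamma_jx^j/j!$ and $g=\sum_{j\ge0}\delta_jx^j/j!$ (everywhere convergent series) one sets $f*g=\sum_{j\ge0}\gamma_j\delta_jx^j/j!$; it is commutative and associative. *)

theory Defs
  imports "HOL-Analysis.Analysis" "HOL-Computational_Algebra.Polynomial"
begin

text \<open>Taylor coefficients at 0 of a function on the complex plane: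
  for an entire function f = sum_j gamma_j z^j / j!, gamma_j is the j-th derivative at 0.\<close>
definition taylor_coeff :: "(complex \<Rightarrow> complex) \<Rightarrow> nat \<Rightarrow> complex" where
  "taylor_coeff f j = (deriv ^^ j) f 0"

definition schur_szego :: "(complex \<Rightarrow> complex) \<Rightarrow> (complex \<Rightarrow> complex) \<Rightarrow> complex \<Rightarrow> complex" where
  "schur_szego f g = (\<lambda>z. \<Sum>j. taylor_coeff f j * taylor_coeff g j * z ^ j / fact j)"

end

theory Submission
  imports Defs "HOL-Complex_Analysis.Complex_Analysis"
begin

text \<open>Write \<open>T\<^sub>k p = x (p + p') - k p\<close> (\<open>euler_op k\<close> below). Since \<open>(e\<^sup>x p)' = e\<^sup>x (p + p')\<close>, the Taylor coefficients of
  \<open>e\<^sup>x p\<close> are the values at 0 of the iterates of \<open>p \<mapsto> p + p'\<close>, and this shows that composing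
  \<open>e\<^sup>x p\<close> with \<open>e\<^sup>x (x - k)\<close> gives \<open>e\<^sup>x T\<^sub>k p\<close>. The operators \<open>T\<^sub>k = T\<^sub>0 - k\<close> commute and
  \<open>T\<^sub>k x\<^sup>k = x\<^sup>k\<^sup>+\<^sup>1\<close>, so \<open>U = e\<^sup>x Y\<close> with \<open>Y = T\<^sub>0\<^sup>l\<^sup>-\<^sup>1 x\<^sup>\<mu>\<^sup>+\<^sup>1\<close>.
  Each application of \<open>T\<^sub>0\<close> raises the degree by one and preserves the order \<open>\<mu> + 1\<close> at 0;
  as \<open>T\<^sub>0 p = x e\<^sup>-\<^sup>x (e\<^sup>x p)'\<close> and \<open>e\<^sup>x p\<close> vanishes at \<open>-\<infinity>\<close>, Rolle's theorem produces one more
  negative root at each step. Counting roots against the degree then forces exactly \<open>l - 1\<close>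
  negative roots, all simple.\<close>

definition exp_pderiv :: "'a::idom poly \<Rightarrow> 'a poly" where
  "exp_pderiv p = p + pderiv p"

definition euler_op :: "nat \<Rightarrow> 'a::idom poly \<Rightarrow> 'a poly" where
  "euler_op k p = [:0, 1:] * exp_pderiv p - smult (of_nat k) p"

definition exp_poly :: "complex poly \<Rightarrow> complex \<Rightarrow> complex" where
  "exp_poly p z = exp z * poly p z"

section \<open>Taylor coefficients of \<open>e\<^sup>x p\<close>\<close>

lemma exp_pderiv_add: "exp_pderiv (p + q) = exp_pderiv p + exp_pderiv q"
  by (simp add: exp_pderiv_def pderiv_add)

lemma exp_pderiv_diff: "exp_pderiv (p - q) = exp_pderiv p - exp_pderiv q"
  by (simp add: exp_pderiv_def pderiv_diff)

lemma exp_pderiv_smult: "exp_pderiv (smult c p) = smult c (exp_pderiv p)"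
  by (simp add: exp_pderiv_def pderiv_smult smult_add_right)

lemma exp_pderiv_pCons_0: "exp_pderiv (pCons 0 p) = pCons 0 (exp_pderiv p) + p"
  by (simp add: exp_pderiv_def pderiv_pCons algebra_simps)

lemma funpow_exp_pderiv_diff:
  "(exp_pderiv ^^ j) (p - q) = (exp_pderiv ^^ j) p - (exp_pderiv ^^ j) q"
  by (induction j) (simp_all add: exp_pderiv_diff)

lemma funpow_exp_pderiv_smult: "(exp_pderiv ^^ j) (smult c p) = smult c ((exp_pderiv ^^ j) p)"
  by (induction j) (simp_all add: exp_pderiv_smult)

lemma funpow_exp_pderiv_1: "(exp_pderiv ^^ j) 1 = 1"
  by (induction j) (simp_all add: exp_pderiv_def)

lemma funpow_exp_pderiv_pCons_0:
  "(exp_pderiv ^^ Suc j) (pCons 0 p) = pCons 0 ((exp_pderiv ^^ Suc j) p) + smult (of_nat (Suc j)) ((exp_pderiv ^^ j) p)"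
proof (induction j)
  case 0
  then show ?case by (simp add: exp_pderiv_pCons_0)
next
  case (Suc j)
  then show ?case
    by (simp add: exp_pderiv_add exp_pderiv_smult exp_pderiv_pCons_0 smult_add_left
        del: of_nat_Suc add: of_nat_Suc[of "Suc j"])
qed

lemma poly_funpow_exp_pderiv_euler_op:
  "poly ((exp_pderiv ^^ j) (euler_op k p)) 0 = (of_nat j - of_nat k) * poly ((exp_pderiv ^^ j) p) 0"
proof -
  have "poly ((exp_pderiv ^^ j) (pCons 0 (exp_pderiv p))) 0 = of_nat j * poly ((exp_pderiv ^^ j) p) 0"
    by (cases j) (simp_all only: funpow_exp_pderiv_pCons_0, simp_all add: funpow_Suc_right del: funpow.simps)
  then show ?thesis
    by (simp add: euler_op_def funpow_exp_pderiv_diff funpow_exp_pderiv_smult algebra_simps)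
qed

lemma has_field_derivative_exp_poly: "(exp_poly p has_field_derivative exp_poly (exp_pderiv p) z) (at z)"
  unfolding exp_poly_def[abs_def] exp_pderiv_def
  by (auto intro!: derivative_eq_intros simp: algebra_simps)

lemma funpow_deriv_exp_poly: "(deriv ^^ j) (exp_poly p) = exp_poly ((exp_pderiv ^^ j) p)"
  by (induction j) (simp_all add: DERIV_imp_deriv[OF has_field_derivative_exp_poly])

lemma taylor_coeff_exp_poly: "taylor_coeff (exp_poly p) j = poly ((exp_pderiv ^^ j) p) 0"
  by (simp add: taylor_coeff_def funpow_deriv_exp_poly exp_poly_def)

lemma exp_poly_taylor_sums: "(\<lambda>j. taylor_coeff (exp_poly p) j * z ^ j / fact j) sums exp_poly p z"
proof -
  have "exp_poly p holomorphic_on UNIV"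
    unfolding exp_poly_def[abs_def] by (intro holomorphic_intros)
  then have "(\<lambda>j. (deriv ^^ j) (exp_poly p) 0 / fact j * (z - 0) ^ j) sums exp_poly p z"
    by (intro holomorphic_power_series[where r = "norm z + 1"]) auto
  then show ?thesis
    by (simp add: taylor_coeff_def field_simps)
qed

lemma schur_szego_exp_poly_linear:
  "schur_szego (exp_poly p) (exp_poly [:- of_nat k, 1:]) = exp_poly (euler_op k p)"
proof
  fix z
  have "[:- of_nat k, 1:] = euler_op k (1 :: complex poly)"
    by (simp add: euler_op_def exp_pderiv_def)
  then have "(\<lambda>j. taylor_coeff (exp_poly p) j * taylor_coeff (exp_poly [:- of_nat k, 1:]) j * z ^ j / fact j)
      = (\<lambda>j. taylor_coeff (exp_poly (euler_op k p)) j * z ^ j / fact j)"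
    by (simp add: taylor_coeff_exp_poly poly_funpow_exp_pderiv_euler_op funpow_exp_pderiv_1 mult.commute)
  then show "schur_szego (exp_poly p) (exp_poly [:- of_nat k, 1:]) z = exp_poly (euler_op k p) z"
    using exp_poly_taylor_sums unfolding schur_szego_def by (simp add: sums_iff)
qed

lemma foldl_schur_szego_exp_poly:
  "foldl schur_szego (exp_poly p) (map (\<lambda>k. exp_poly [:- of_nat k, 1:]) ks)
     = exp_poly (foldl (\<lambda>p k. euler_op k p) p ks)"
  by (induction ks arbitrary: p) (simp_all add: schur_szego_exp_poly_linear)

section \<open>Algebra of the operators \<open>euler_op\<close>\<close>

lemma euler_op_0: "euler_op 0 p = pCons 0 (exp_pderiv p)"
  by (simp add: euler_op_def)

lemma euler_op_eq_euler_op_0: "euler_op k p = euler_op 0 p - smult (of_nat k) p"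
  by (simp add: euler_op_def)

lemma euler_op_0_diff: "euler_op 0 (p - q) = euler_op 0 p - euler_op 0 q"
  by (simp add: euler_op_0 exp_pderiv_diff)

lemma euler_op_0_smult: "euler_op 0 (smult c p) = smult c (euler_op 0 p)"
  by (simp add: euler_op_0 exp_pderiv_smult)

lemma euler_op_commute: "euler_op k (euler_op m p) = euler_op m (euler_op k p)"
  by (simp add: euler_op_eq_euler_op_0[of k] euler_op_eq_euler_op_0[of m] euler_op_0_diff euler_op_0_smult smult_diff_right algebra_simps)

lemma euler_op_funpow_commute: "euler_op k ((euler_op m ^^ n) p) = (euler_op m ^^ n) (euler_op k p)"
proof (induction n)
  case (Suc n)
  then show ?case by (simp add: euler_op_commute[of k m])
qed simp

lemma foldl_euler_op_funpow:
  "foldl (\<lambda>p k. euler_op k p) ((euler_op m ^^ n) p) ks = (euler_op m ^^ n) (foldl (\<lambda>p k. euler_op k p) p ks)"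
  by (induction ks arbitrary: p) (simp_all add: euler_op_funpow_commute)

lemma foldl_euler_op_replicate: "foldl (\<lambda>p k. euler_op k p) p (replicate n m) = (euler_op m ^^ n) p"
  by (induction n arbitrary: p) (simp_all add: funpow_swap1)

lemma x_mult_pderiv_power:
  "[:0, 1:] * pderiv ([:0, 1:] ^ k) = smult (of_nat k) ([:0, 1:] ^ k :: 'a::idom poly)"
proof (cases k)
  case (Suc m)
  have "pderiv ([:0, 1:] ^ Suc m) = smult (of_nat (Suc m)) ([:0, 1:] ^ m :: 'a poly)"
    by (simp only: pderiv_power_Suc) (simp add: pderiv_pCons)
  then show ?thesis
    by (simp add: Suc)
qed simp

lemma euler_op_power: "euler_op k ([:0, 1:] ^ k) = [:0, 1:] ^ Suc k"
  by (simp only: euler_op_def exp_pderiv_def distrib_left x_mult_pderiv_power power_Suc) simp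

lemma foldl_euler_op_upt: "foldl (\<lambda>p k. euler_op k p) [:0, 1:] [1..<Suc m] = [:0, 1:] ^ Suc m"
  by (induction m) (simp_all add: euler_op_power del: power_Suc)

lemma map_poly_of_real_euler_op:
  "map_poly of_real (euler_op k p) = euler_op k (map_poly of_real p :: 'a::{real_algebra_1, idom} poly)"
  by (rule poly_eqI) (simp add: euler_op_def exp_pderiv_def coeff_map_poly coeff_pderiv coeff_pCons split: nat.split)

lemma degree_exp_pderiv: "degree (exp_pderiv p) = degree (p :: 'a::{idom, semiring_char_0} poly)"
proof (cases "p = 0")
  case False
  have "coeff (exp_pderiv p) (degree p) = lead_coeff p"
    by (simp add: exp_pderiv_def coeff_pderiv coeff_eq_0)
  then have "degree p \<le> degree (exp_pderiv p)"
    using False by (intro le_degree) simp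
  moreover have "degree (exp_pderiv p) \<le> degree p"
    unfolding exp_pderiv_def by (intro degree_add_le) (simp_all add: degree_pderiv)
  ultimately show ?thesis by simp
qed (simp add: exp_pderiv_def)

lemma exp_pderiv_eq_0_iff: "exp_pderiv p = 0 \<longleftrightarrow> p = (0 :: 'a::{idom, semiring_char_0} poly)"
proof
  assume "exp_pderiv p = 0"
  then have "degree p = 0" using degree_exp_pderiv[of p] by simp
  then show "p = 0"
    using \<open>exp_pderiv p = 0\<close> by (metis add.right_neutral exp_pderiv_def pderiv_eq_0_iff)
qed (simp add: exp_pderiv_def)

lemma funpow_euler_op_0_eq_0_iff:
  "(euler_op 0 ^^ n) p = 0 \<longleftrightarrow> p = (0 :: 'a::{idom, semiring_char_0} poly)"
  by (induction n) (simp_all add: euler_op_0 exp_pderiv_eq_0_iff)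

lemma degree_funpow_euler_op_0:
  "p \<noteq> 0 \<Longrightarrow> degree ((euler_op 0 ^^ n) p) = degree (p :: 'a::{idom, semiring_char_0} poly) + n"
  by (induction n) (simp_all add: euler_op_0 degree_exp_pderiv funpow_euler_op_0_eq_0_iff exp_pderiv_eq_0_iff)

lemma euler_op_0_power_mult:
  "euler_op 0 ([:0, 1:] ^ m * w) = [:0, 1:] ^ m * ([:0, 1:] * exp_pderiv w + smult (of_nat m) w)"
proof -
  have "euler_op 0 ([:0, 1:] ^ m * w)
      = [:0, 1:] ^ m * ([:0, 1:] * exp_pderiv w) + ([:0, 1:] * pderiv ([:0, 1:] ^ m)) * w"
    unfolding euler_op_def exp_pderiv_def pderiv_mult by (simp only: smult_0_left of_nat_0 diff_zero) algebra
  then show ?thesis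
    unfolding x_mult_pderiv_power by (simp add: algebra_simps)
qed

lemma funpow_euler_op_0_power_mult:
  fixes w :: "'a::{idom, ring_char_0} poly"
  assumes "m > 0" and "poly w 0 \<noteq> 0"
  shows "\<exists>w'. (euler_op 0 ^^ n) ([:0, 1:] ^ m * w) = [:0, 1:] ^ m * w' \<and> poly w' 0 \<noteq> 0"
proof (induction n)
  case (Suc n)
  then obtain w' where "(euler_op 0 ^^ n) ([:0, 1:] ^ m * w) = [:0, 1:] ^ m * w'" "poly w' 0 \<noteq> 0"
    by blast
  with \<open>m > 0\<close> show ?case
    by (intro exI[of _ "[:0, 1:] * exp_pderiv w' + smult (of_nat m) w'"]) (simp add: euler_op_0_power_mult)
qed (use assms in auto)

lemma order_0_funpow_euler_op_0_power:
  fixes m :: nat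
  assumes "m > 0"
  shows "order 0 ((euler_op 0 ^^ n) ([:0, 1:] ^ m) :: 'a::{idom, ring_char_0} poly) = m"
proof -
  obtain w :: "'a poly" where w: "(euler_op 0 ^^ n) ([:0, 1:] ^ m) = [:0, 1:] ^ m * w" "poly w 0 \<noteq> 0"
    using funpow_euler_op_0_power_mult[OF assms, of 1 n] by auto
  then have "w \<noteq> 0" by auto
  then show ?thesis
    using order_power_n_n[of "0::'a" m] by (simp add: w order_mult order_0I)
qed

section \<open>Negative roots\<close>

lemma tendsto_exp_mult_power_at_bot: "((\<lambda>x::real. exp x * x ^ n) \<longlongrightarrow> 0) at_bot"
proof -
  have "exp (- x) * (- x) ^ n = (-1) ^ n * (x ^ n / exp x)" for x :: real
    by (simp add: power_minus[of x n] exp_minus field_simps)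
  moreover have "((\<lambda>x::real. (-1) ^ n * (x ^ n / exp x)) \<longlongrightarrow> 0) at_top"
    by (intro tendsto_mult_right_zero tendsto_power_div_exp_0)
  ultimately show ?thesis
    by (simp add: filterlim_at_bot_mirror)
qed

lemma tendsto_exp_mult_poly_at_bot: "((\<lambda>x::real. exp x * poly p x) \<longlongrightarrow> 0) at_bot"
proof -
  have "((\<lambda>x. \<Sum>i\<le>degree p. coeff p i * (exp x * x ^ i)) \<longlongrightarrow> (\<Sum>i\<le>degree p. coeff p i * 0)) at_bot"
    by (intro tendsto_sum tendsto_mult tendsto_const tendsto_exp_mult_power_at_bot)
  then show ?thesis
    by (simp add: poly_altdef sum_distrib_left mult_ac)
qed

lemma Rolle_real:
  fixes g g' :: "real \<Rightarrow> real"
  assumes "\<And>x. (g has_real_derivative g' x) (at x)" and "a < b" and "g a = g b"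
  shows "\<exists>z. a < z \<and> z < b \<and> g' z = 0"
proof -
  have "continuous_on {a..b} g"
    using assms(1) by (meson DERIV_isCont continuous_at_imp_continuous_on)
  moreover have "\<And>x. g differentiable (at x)"
    using assms(1) real_differentiable_def by blast
  ultimately obtain z where "a < z" "z < b" "DERIV g z :> 0"
    using Rolle[of a b g] assms(2,3) by blast
  then show ?thesis
    using assms(1) DERIV_unique by blast
qed

text \<open>The level \<open>g a / 2\<close> is crossed once below \<open>a\<close> and once between \<open>a\<close> and \<open>s\<close>.\<close>
lemma Rolle_at_bot_pos:
  fixes g g' :: "real \<Rightarrow> real"
  assumes deriv: "\<And>x. (g has_real_derivative g' x) (at x)" and lim: "(g \<longlongrightarrow> 0) at_bot"
    and "a < s" "g a > 0" "g s = 0"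
  shows "\<exists>t<s. g' t = 0"
proof -
  define c where "c = g a / 2"
  have cont: "continuous_on {x..y} g" for x y
    using deriv by (meson DERIV_isCont continuous_at_imp_continuous_on)
  have "c > 0"
    using \<open>g a > 0\<close> by (simp add: c_def)
  then have "\<forall>\<^sub>F x in at_bot. dist (g x) 0 < c"
    using lim unfolding tendsto_iff by blast
  then obtain N where N: "\<And>x. x \<le> N \<Longrightarrow> \<bar>g x\<bar> < c"
    by (auto simp: eventually_at_bot_linorder)
  define b where "b = min N a"
  have "\<bar>g b\<bar> < c" "b \<le> a"
    using N by (auto simp: b_def)
  moreover have "c \<le> g a"
    using \<open>c > 0\<close> by (simp add: c_def)
  ultimately obtain x1 where x1: "x1 \<le> a" "g x1 = c"
    using IVT'[of g b c a] cont by force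
  obtain x2 where x2: "a \<le> x2" "x2 \<le> s" "g x2 = c"
    using IVT2'[of g s c a] cont \<open>a < s\<close> \<open>g a > 0\<close> \<open>g s = 0\<close> by (auto simp: c_def)
  have "x1 \<noteq> x2"
    using x1 x2 \<open>g a > 0\<close> by (auto simp: c_def)
  then obtain t where "x1 < t" "t < x2" "g' t = 0"
    using Rolle_real[OF deriv, of x1 x2] x1 x2 by auto
  then show ?thesis
    using x2 by (intro exI[of _ t]) auto
qed

lemma Rolle_at_bot:
  fixes g g' :: "real \<Rightarrow> real"
  assumes deriv: "\<And>x. (g has_real_derivative g' x) (at x)" and lim: "(g \<longlongrightarrow> 0) at_bot"
    and "g s = 0"
  shows "\<exists>t<s. g' t = 0"
proof (cases "g (s - 1)" "0::real" rule: linorder_cases)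
  case less
  have "((\<lambda>x. - g x) has_real_derivative - g' x) (at x)" for x
    using deriv by (rule DERIV_minus)
  moreover have "((\<lambda>x. - g x) \<longlongrightarrow> 0) at_bot"
    using tendsto_minus[OF lim] by simp
  ultimately have "\<exists>t<s. - g' t = 0"
    using Rolle_at_bot_pos[of "\<lambda>x. - g x" "\<lambda>x. - g' x" "s - 1" s] less \<open>g s = 0\<close> by auto
  then show ?thesis by simp
next
  case equal
  then show ?thesis
    using Rolle_real[OF deriv, of "s - 1" s] \<open>g s = 0\<close> by auto
next
  case greater
  then show ?thesis
    using Rolle_at_bot_pos[OF deriv lim, of "s - 1" s] \<open>g s = 0\<close> by auto
qed

lemma deriv_zeros_interlace:
  fixes g g' :: "real \<Rightarrow> real"
  assumes deriv: "\<And>x. (g has_real_derivative g' x) (at x)" and lim: "(g \<longlongrightarrow> 0) at_bot"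
    and "finite Z" and zero: "\<And>s. s \<in> Z \<Longrightarrow> g s = 0"
  shows "\<exists>f. inj_on f Z \<and> (\<forall>s\<in>Z. f s < s \<and> g' (f s) = 0)"
proof -
  have "\<exists>t. t < s \<and> g' t = 0 \<and> (\<forall>z\<in>Z. z < s \<longrightarrow> z < t)" if "s \<in> Z" for s
  proof (cases "{z\<in>Z. z < s} = {}")
    case True
    then show ?thesis
      using Rolle_at_bot[OF deriv lim zero[OF \<open>s \<in> Z\<close>]] by blast
  next
    case False
    define a where "a = Max {z\<in>Z. z < s}"
    have "a \<in> Z" "a < s" and a_max: "\<And>z. z \<in> Z \<Longrightarrow> z < s \<Longrightarrow> z \<le> a"
      using Max_in[of "{z\<in>Z. z < s}"] Max_ge[of "{z\<in>Z. z < s}"] False \<open>finite Z\<close>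
      by (auto simp: a_def)
    then obtain t where "a < t" "t < s" "g' t = 0"
      using Rolle_real[OF deriv, of a s] zero \<open>s \<in> Z\<close> by auto
    then show ?thesis
      using a_max by fastforce
  qed
  then obtain f where f: "\<And>s. s \<in> Z \<Longrightarrow> f s < s \<and> g' (f s) = 0 \<and> (\<forall>z\<in>Z. z < s \<longrightarrow> z < f s)"
    by metis
  have "inj_on f Z"
  proof (rule inj_onI)
    fix x y
    assume "x \<in> Z" "y \<in> Z" "f x = f y"
    then show "x = y"
      using f[OF \<open>x \<in> Z\<close>] f[OF \<open>y \<in> Z\<close>] by (metis linorder_neqE_linordered_idom order.asym)
  qed
  then show ?thesis
    using f by blast
qed

lemma has_real_derivative_exp_mult_poly:
  "((\<lambda>x. exp x * poly p x) has_real_derivative exp x * poly (exp_pderiv p) x) (at x)"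
  unfolding exp_pderiv_def by (auto intro!: derivative_eq_intros simp: algebra_simps)

text \<open>Between consecutive zeros of \<open>e\<^sup>x p\<close> in \<open>(-\<infinity>, 0]\<close>, and below the smallest one, lies a zero
  of its derivative \<open>e\<^sup>x (p + p')\<close>.\<close>
lemma card_neg_roots_euler_op_0:
  fixes p :: "real poly"
  assumes "p \<noteq> 0" and "poly p 0 = 0"
  shows "Suc (card {x. x < 0 \<and> poly p x = 0}) \<le> card {x. x < 0 \<and> poly (euler_op 0 p) x = 0}"
proof -
  define A where "A = {x. x < 0 \<and> poly p x = 0}"
  have "finite A"
    using poly_roots_finite[OF \<open>p \<noteq> 0\<close>] unfolding A_def by (rule rev_finite_subset) auto
  obtain f where "inj_on f (insert 0 A)"
    and f: "\<And>s. s \<in> insert 0 A \<Longrightarrow> f s < s \<and> exp (f s) * poly (exp_pderiv p) (f s) = 0"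
    using deriv_zeros_interlace[OF has_real_derivative_exp_mult_poly tendsto_exp_mult_poly_at_bot,
        of "insert 0 A" p] \<open>finite A\<close> \<open>poly p 0 = 0\<close> by (auto simp: A_def)
  have "f ` insert 0 A \<subseteq> {x. x < 0 \<and> poly (euler_op 0 p) x = 0}"
  proof
    fix y
    assume "y \<in> f ` insert 0 A"
    then obtain s where "s \<in> insert 0 A" "y = f s" by blast
    moreover have "s \<le> 0"
      using \<open>s \<in> insert 0 A\<close> by (auto simp: A_def)
    ultimately show "y \<in> {x. x < 0 \<and> poly (euler_op 0 p) x = 0}"
      using f[of s] by (simp add: euler_op_0)
  qed
  moreover have "finite {x. x < 0 \<and> poly (euler_op 0 p) x = 0}"
    using funpow_euler_op_0_eq_0_iff[of 1 p] \<open>p \<noteq> 0\<close>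
    by (intro rev_finite_subset[OF poly_roots_finite]) auto
  ultimately have "card (insert 0 A) \<le> card {x. x < 0 \<and> poly (euler_op 0 p) x = 0}"
    using card_inj_on_le[OF \<open>inj_on f (insert 0 A)\<close>] by blast
  then show ?thesis
    using \<open>finite A\<close> by (simp add: A_def)
qed

lemma card_neg_roots_funpow_euler_op_0:
  assumes "m > 0"
  shows "n \<le> card {x. x < 0 \<and> poly ((euler_op 0 ^^ n) ([:0, 1:] ^ m :: real poly)) x = 0}"
proof (induction n)
  case (Suc n)
  let ?p = "(euler_op 0 ^^ n) ([:0, 1:] ^ m :: real poly)"
  obtain w where "?p = [:0, 1:] ^ m * w"
    using funpow_euler_op_0_power_mult[OF assms, of 1 n] by auto
  then have "poly ?p 0 = 0"
    using assms by (simp add: power_0_left)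
  moreover have "?p \<noteq> 0"
    by (simp add: funpow_euler_op_0_eq_0_iff)
  ultimately show ?case
    using card_neg_roots_euler_op_0[of ?p] Suc.IH by simp
qed simp

lemma sum_order_le_degree:
  assumes "p \<noteq> 0"
  shows "(\<Sum>x\<in>S. order x p) \<le> degree p"
proof (cases "finite S")
  case True
  have "(\<Sum>x\<in>S. order x p) = (\<Sum>x\<in>S \<inter> {x. poly p x = 0}. order x p)"
    using True by (intro sum.mono_neutral_right) (auto simp: order_root)
  also have "\<dots> \<le> (\<Sum>x\<in>{x. poly p x = 0}. order x p)"
    using poly_roots_finite[OF assms] by (intro sum_mono2) auto
  also have "\<dots> = size (proots p)"
    using assms by (simp add: size_multiset_overloaded_eq)
  also have "\<dots> \<le> degree p"
    by (rule size_proots_le)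
  finally show ?thesis .
qed simp

lemma neg_roots_simple:
  fixes p :: "real poly"
  assumes "p \<noteq> 0" and deg: "degree p \<le> order 0 p + n"
    and many: "n \<le> card {x. x < 0 \<and> poly p x = 0}"
  shows "card {x. x < 0 \<and> poly p x = 0} = n \<and> (\<forall>x. x < 0 \<and> poly p x = 0 \<longrightarrow> order x p = 1)"
proof -
  define N where "N = {x. x < 0 \<and> poly p x = 0}"
  have "finite N"
    using poly_roots_finite[OF \<open>p \<noteq> 0\<close>] unfolding N_def by (rule rev_finite_subset) auto
  have pos: "1 \<le> order x p" if "x \<in> N" for x
    using that \<open>p \<noteq> 0\<close> by (auto simp: N_def order_root)
  have "order 0 p + (\<Sum>x\<in>N. order x p) = (\<Sum>x\<in>insert 0 N. order x p)"
    using \<open>finite N\<close> by (simp add: N_def)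
  also have "\<dots> \<le> degree p"
    by (rule sum_order_le_degree[OF \<open>p \<noteq> 0\<close>])
  finally have sum_le: "(\<Sum>x\<in>N. order x p) \<le> n"
    using deg by simp
  have "card N \<le> (\<Sum>x\<in>N. order x p)"
    using sum_mono[of N "\<lambda>_. 1" "\<lambda>x. order x p"] pos by simp
  then have "card N = n"
    using sum_le many by (simp add: N_def)
  moreover have "order x p = 1" if "x \<in> N" for x
  proof (rule ccontr)
    assume "order x p \<noteq> 1"
    then have "1 < order x p"
      using pos[OF that] by simp
    then have "(\<Sum>x\<in>N. 1) < (\<Sum>x\<in>N. order x p)"
      using pos \<open>x \<in> N\<close> \<open>finite N\<close> by (intro sum_strict_mono_ex1) auto
    then show False
      using sum_le many by (simp add: N_def)
  qed
  ultimately show ?thesis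
    by (auto simp: N_def)
qed

lemma map_poly_of_real_funpow_euler_op:
  "map_poly of_real ((euler_op k ^^ n) p) = (euler_op k ^^ n) (map_poly of_real p :: 'a::{real_algebra_1, idom} poly)"
  by (induction n) (simp_all add: map_poly_of_real_euler_op)

lemma map_poly_of_real_x_power: "map_poly of_real ([:0, 1:] ^ m) = ([:0, 1:] ^ m :: 'a::{real_algebra_1, idom} poly)"
  by (induction m) (simp_all add: map_poly_pCons)

theorem proposition5p1:
  fixes l \<mu> :: nat
  assumes "l \<ge> 1"
  defines "U \<equiv> foldl schur_szego (\<lambda>z. exp z * z)
                 (replicate (l - 1) (\<lambda>z. exp z * z)
                  @ map (\<lambda>k z. exp z * (z - of_nat k)) [1..<\<mu> + 1])"
  shows "\<exists>Y :: real poly.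
           (\<forall>z. U z = exp z * poly (map_poly complex_of_real Y) z)
         \<and> degree Y = l + \<mu>
         \<and> order 0 Y = \<mu> + 1
         \<and> card {x. x < 0 \<and> poly Y x = 0} = l - 1
         \<and> (\<forall>x. x < 0 \<and> poly Y x = 0 \<longrightarrow> order x Y = 1)"
proof -
  define Y :: "real poly" where "Y = (euler_op 0 ^^ (l - 1)) ([:0, 1:] ^ Suc \<mu>)"
  have x_factor: "(\<lambda>z. exp z * z) = exp_poly [:0, 1:]"
    and factors: "(\<lambda>k z. exp z * (z - of_nat k)) = (\<lambda>k. exp_poly [:- of_nat k, 1:])"
    by (simp_all add: fun_eq_iff exp_poly_def)
  have "U = foldl schur_szego (exp_poly [:0, 1:])
      (map (\<lambda>k. exp_poly [:- of_nat k, 1:]) (replicate (l - 1) 0 @ [1..<Suc \<mu>]))"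
    unfolding U_def x_factor factors by (simp del: upt_Suc)
  also have "\<dots> = exp_poly ((euler_op 0 ^^ (l - 1)) ([:0, 1:] ^ Suc \<mu>))"
    by (simp only: foldl_schur_szego_exp_poly foldl_append foldl_euler_op_replicate
        foldl_euler_op_funpow foldl_euler_op_upt)
  also have "\<dots> = exp_poly (map_poly of_real Y)"
    by (simp only: Y_def map_poly_of_real_funpow_euler_op map_poly_of_real_x_power)
  finally have "\<forall>z. U z = exp z * poly (map_poly complex_of_real Y) z"
    by (simp add: exp_poly_def)
  moreover have "Y \<noteq> 0" and "degree Y = l + \<mu>"
    using \<open>l \<ge> 1\<close> by (simp_all add: Y_def funpow_euler_op_0_eq_0_iff degree_funpow_euler_op_0
        degree_linear_power)
  moreover have "order 0 Y = \<mu> + 1"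
    unfolding Y_def by (simp add: order_0_funpow_euler_op_0_power del: power_Suc)
  moreover have "l - 1 \<le> card {x. x < 0 \<and> poly Y x = 0}"
    unfolding Y_def by (rule card_neg_roots_funpow_euler_op_0) simp
  ultimately show ?thesis
    using neg_roots_simple[of Y "l - 1"] by auto
qed

end
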